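(* Assume (A1)–(A3) and the latent index model (LI) below. For any positive definite weighting matrix $W$, $$\beta^*(W)=\sum_{\ell=1}^L\lambda_\ell(W)\mathrm{Wald}_\ell=\int_0^1\mathrm{MTE}(u)\,\bar h(u;\lambda(W))\,du,$$ where $\bar h(u;\omega)=\sum_{\ell=1}^L\omega_\ell h_\ell(u)$, and $\int_0^1\bar h(u;\omega)\,du=1$ for any $\omega\in\mathbb R^L$ with $\sum_\ell\omega_\ell=1$.
   Context: Observe i.i.d. $(Y_i,D_i,\mathbf Z_i)$, $Y_i\in\mathbb R$, $D_i\in\{0,1\}$, $\mathbf Z_i=(Z_{1i},\dots,Z_{Li})'\in\{0,1\}^L$, $L\ge2$; potential outcomes $Y_i(0),Y_i(1)$, compliance type $D_i(\cdot):\{0,1\}^L\to\{0,1\}$, $D_i=D_i(\mathbf Z_i)$, $Y_i=D_iY_i(1)+(1-D_i)Y_i(0)$. $p_\ell=P(Z_{\ell i}=1)$, $\pi_\ell,\rho_\ell$ the differences of $\mathbb E[D_i\mid Z_{\ell i}=z]$, $\mathbb E[Y_i\mid Z_{\ell i}=z]$ between $z=1,0$, $\mathrm{Wald}_\ell=\rho_\ell/\pi_\ell$, $\gamma_\ell=\mathrm{Cov}(D_i,Z_{\ell i})$, $\boldsymbol\gamma=(\gamma_\ell)_\ell$, $\Sigma_Z=\mathrm{Var}(\mathbf Z_i)$. $\lambda_\ell(W)=\gamma_\ell[W\boldsymbol\gamma]_\ell/(\boldsymbol\gamma'W\boldsymbol\gamma)$ and $\beta^*(W)$ is the probability limit of the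 GMM estimator $\arg\min_\beta g_n(\beta)'Wg_n(\beta)$ with $g_{n,\ell}(\beta)=n^{-1}\sum_i(Y_i-\beta D_i)(Z_{\ell i}-\hat p_\ell)$. (LI): $D_i=\mathbf 1\{V(\mathbf Z_i)\ge U_i\}$ for a measurable $V:\{0,1\}^L\to\mathbb R$, with $U_i\sim\mathrm{Uniform}(0,1)$ conditional on potential outcomes (after normalization); then $p(z)=P(D_i=1\mid\mathbf Z_i=z)=V(z)$. $\mathrm{MTE}(u)=\mathbb E[Y_i(1)-Y_i(0)\mid U_i=u]$, and $$h_\ell(u)=\frac{P(p(\mathbf Z_i)\ge u\mid Z_{\ell i}=1)-P(p(\mathbf Z_i)\ge u\mid Z_{\ell i}=0)}{\mathbb E[p(\mathbf Z_i)\mid Z_{\ell i}=1]-\mathbb E[p(\mathbf Z_i)\mid Z_{\ell i}=0]}.$$ Assumptions: (A1) $(Y_i(0),Y_i(1),D_i(\cdot))$ independent of $\mathbf Z_i$. (A2) $D_i(z)$ nondecreasing in each coordinate for every $i$. (A3) $p_\ell>0$, $\pi_\ell>0$ for all $\ell$; $\Sigma_Z$ positive definite. *)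

theory Defs
  imports "HOL-Probability.Probability"
begin

text \<open>Instruments are indexed by 0..<L; a realisation of the instrument vector is
  a function z :: nat => bool (with z l = False for l >= L, i.e. z in {0,1}^L).
  Vectors are nat => real and matrices nat => nat => real, indexed on {0..<L}.\<close>

definition zr :: "bool \<Rightarrow> real" where
  "zr b = (if b then 1 else 0)"

definition in_cube :: "nat \<Rightarrow> (nat \<Rightarrow> bool) \<Rightarrow> bool" where
  "in_cube L z \<longleftrightarrow> (\<forall>l\<ge>L. \<not> z l)"

definition cexp_ev :: "'a measure \<Rightarrow> ('a \<Rightarrow> real) \<Rightarrow> 'a set \<Rightarrow> real" where
  "cexp_ev M X A = (\<integral>\<omega>. indicator A \<omega> * X \<omega> \<partial>M) / measure M A"

definition covar :: "'a measure \<Rightarrow> ('a \<Rightarrow> real) \<Rightarrow> ('a \<Rightarrow> real) \<Rightarrow> real" where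
  "covar M X X' = (\<integral>\<omega>. X \<omega> * X' \<omega> \<partial>M) - (\<integral>\<omega>. X \<omega> \<partial>M) * (\<integral>\<omega>. X' \<omega> \<partial>M)"

definition pos_def_on :: "nat \<Rightarrow> (nat \<Rightarrow> nat \<Rightarrow> real) \<Rightarrow> bool" where
  "pos_def_on L A \<longleftrightarrow> (\<forall>j<L. \<forall>k<L. A j k = A k j) \<and>
     (\<forall>x::nat \<Rightarrow> real. (\<exists>l<L. x l \<noteq> 0) \<longrightarrow> (\<Sum>j<L. \<Sum>k<L. x j * A j k * x k) > 0)"

definition p_inst :: "'a measure \<Rightarrow> ('a \<Rightarrow> nat \<Rightarrow> bool) \<Rightarrow> nat \<Rightarrow> real" where
  "p_inst M Z l = measure M {\<omega> \<in> space M. Z \<omega> l}"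

text \<open>E[X | Z_l = 1] - E[X | Z_l = 0]  (this gives pi_l for X = D and rho_l for X = Y).\<close>
definition diff_inst :: "'a measure \<Rightarrow> ('a \<Rightarrow> nat \<Rightarrow> bool) \<Rightarrow> ('a \<Rightarrow> real) \<Rightarrow> nat \<Rightarrow> real" where
  "diff_inst M Z X l = cexp_ev M X {\<omega> \<in> space M. Z \<omega> l} - cexp_ev M X {\<omega> \<in> space M. \<not> Z \<omega> l}"

definition wald :: "'a measure \<Rightarrow> ('a \<Rightarrow> nat \<Rightarrow> bool) \<Rightarrow> ('a \<Rightarrow> real) \<Rightarrow> ('a \<Rightarrow> real) \<Rightarrow> nat \<Rightarrow> real" where
  "wald M Z Y D l = diff_inst M Z Y l / diff_inst M Z D l"

definition gam :: "'a measure \<Rightarrow> ('a \<Rightarrow> nat \<Rightarrow> bool) \<Rightarrow> ('a \<Rightarrow> real) \<Rightarrow> nat \<Rightarrow> real" where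
  "gam M Z D l = covar M D (\<lambda>\<omega>. zr (Z \<omega> l))"

definition SigmaZ :: "'a measure \<Rightarrow> ('a \<Rightarrow> nat \<Rightarrow> bool) \<Rightarrow> nat \<Rightarrow> nat \<Rightarrow> real" where
  "SigmaZ M Z j k = covar M (\<lambda>\<omega>. zr (Z \<omega> j)) (\<lambda>\<omega>. zr (Z \<omega> k))"

definition lam :: "nat \<Rightarrow> (nat \<Rightarrow> real) \<Rightarrow> (nat \<Rightarrow> nat \<Rightarrow> real) \<Rightarrow> nat \<Rightarrow> real" where
  "lam L g W l = g l * (\<Sum>k<L. W l k * g k) / (\<Sum>j<L. \<Sum>k<L. g j * W j k * g k)"

text \<open>Population GMM moment g_l(beta) = E[(Y - beta D)(Z_l - p_l)], the probability limit
  of the sample moment g_{n,l}(beta), and the population GMM objective.\<close>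
definition gmm_moment :: "'a measure \<Rightarrow> ('a \<Rightarrow> nat \<Rightarrow> bool) \<Rightarrow> ('a \<Rightarrow> real) \<Rightarrow> ('a \<Rightarrow> real) \<Rightarrow> real \<Rightarrow> nat \<Rightarrow> real" where
  "gmm_moment M Z Y D b l = (\<integral>\<omega>. (Y \<omega> - b * D \<omega>) * (zr (Z \<omega> l) - p_inst M Z l) \<partial>M)"

definition gmm_obj :: "nat \<Rightarrow> 'a measure \<Rightarrow> ('a \<Rightarrow> nat \<Rightarrow> bool) \<Rightarrow> ('a \<Rightarrow> real) \<Rightarrow> ('a \<Rightarrow> real) \<Rightarrow> (nat \<Rightarrow> nat \<Rightarrow> real) \<Rightarrow> real \<Rightarrow> real" where
  "gmm_obj L M Z Y D W b = (\<Sum>j<L. \<Sum>k<L. gmm_moment M Z Y D b j * W j k * gmm_moment M Z Y D b k)"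

text \<open>beta^*(W): the (unique) minimiser of the population GMM objective, i.e. the
  probability limit of the GMM estimator.\<close>
definition beta_star :: "nat \<Rightarrow> 'a measure \<Rightarrow> ('a \<Rightarrow> nat \<Rightarrow> bool) \<Rightarrow> ('a \<Rightarrow> real) \<Rightarrow> ('a \<Rightarrow> real) \<Rightarrow> (nat \<Rightarrow> nat \<Rightarrow> real) \<Rightarrow> real" where
  "beta_star L M Z Y D W = (THE b. \<forall>b'. gmm_obj L M Z Y D W b \<le> gmm_obj L M Z Y D W b')"

definition hfun :: "'a measure \<Rightarrow> ('a \<Rightarrow> nat \<Rightarrow> bool) \<Rightarrow> ((nat \<Rightarrow> bool) \<Rightarrow> real) \<Rightarrow> nat \<Rightarrow> real \<Rightarrow> real" where
  "hfun M Z p l u =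
     (cexp_ev M (\<lambda>\<omega>. indicator {\<omega>. p (Z \<omega>) \<ge> u} \<omega>) {\<omega> \<in> space M. Z \<omega> l}
      - cexp_ev M (\<lambda>\<omega>. indicator {\<omega>. p (Z \<omega>) \<ge> u} \<omega>) {\<omega> \<in> space M. \<not> Z \<omega> l})
     / diff_inst M Z (\<lambda>\<omega>. p (Z \<omega>)) l"

definition hbar :: "nat \<Rightarrow> 'a measure \<Rightarrow> ('a \<Rightarrow> nat \<Rightarrow> bool) \<Rightarrow> ((nat \<Rightarrow> bool) \<Rightarrow> real) \<Rightarrow> (nat \<Rightarrow> real) \<Rightarrow> real \<Rightarrow> real" where
  "hbar L M Z p w u = (\<Sum>l<L. w l * hfun M Z p l u)"

end

theory Submission
  imports Defs
begin

(* Z takes finitely many values and is independent of (Y0, Y1, U). Hence, for X among D, Y, V(Z)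
   and 1{u <= V(Z)}, the contrast E[X | Z_l = 1] - E[X | Z_l = 0] is one fixed signed combination
   of the cell values V(z), E[Y0] + E[(Y1 - Y0) 1{U <= V(z)}] and 1{u <= V(z)}. As U is uniform and
   E[(Y1 - Y0) 1{U <= c}] = E[MTE(U) 1{U <= c}], this gives Wald_l = int_0^1 MTE h_l and
   int_0^1 h_l = 1, both linear in the weights. The population GMM moment is c - beta gamma with
   c_l = Cov(Y, Z_l) = gamma_l Wald_l, so the quadratic objective is uniquely minimised at
   gamma' W c / gamma' W gamma = sum_l lambda_l(W) Wald_l. *)

section \<open>Weighted quadratic forms and the GMM minimiser\<close>

definition quad_form :: "nat \<Rightarrow> (nat \<Rightarrow> nat \<Rightarrow> real) \<Rightarrow> (nat \<Rightarrow> real) \<Rightarrow> (nat \<Rightarrow> real) \<Rightarrow> real" where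
  "quad_form L W x y = (\<Sum>j<L. \<Sum>k<L. x j * W j k * y k)"

lemma pos_def_on_symmetric: "pos_def_on L W \<Longrightarrow> j < L \<Longrightarrow> k < L \<Longrightarrow> W j k = W k j"
  unfolding pos_def_on_def by blast

lemma pos_def_on_pos: "pos_def_on L W \<Longrightarrow> \<exists>l<L. x l \<noteq> 0 \<Longrightarrow> quad_form L W x x > 0"
  unfolding pos_def_on_def quad_form_def by blast

lemma quad_form_delta: "quad_form L W (\<lambda>j. of_bool (j = l)) (\<lambda>j. of_bool (j = l)) = W l l" if "l < L"
  unfolding quad_form_def using that
  by (simp add: Int_insert_left if_distrib[of "sum _"] split del: split_of_bool cong: if_cong)

lemma pos_def_on_diag_pos:
  assumes "pos_def_on L W" and "l < L"
  shows "W l l > 0"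
proof -
  have "\<exists>j<L. of_bool (j = l) \<noteq> (0::real)" using assms(2) by (intro exI[of _ l]) simp
  then have "0 < quad_form L W (\<lambda>j. of_bool (j = l)) (\<lambda>j. of_bool (j = l))"
    by (rule pos_def_on_pos[OF assms(1)])
  then show ?thesis unfolding quad_form_delta[OF \<open>l < L\<close>] .
qed

lemma quad_form_commute:
  assumes "pos_def_on L W"
  shows "quad_form L W x y = quad_form L W y x"
  unfolding quad_form_def
  by (subst sum.swap) (auto intro!: sum.cong simp: pos_def_on_symmetric[OF assms] mult_ac)

lemma quad_form_affine:
  assumes "pos_def_on L W"
  shows "quad_form L W (\<lambda>l. c l - b * g l) (\<lambda>l. c l - b * g l)
       = quad_form L W c c - 2 * b * quad_form L W g c + b\<^sup>2 * quad_form L W g g"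
proof -
  have "quad_form L W (\<lambda>l. c l - b * g l) (\<lambda>l. c l - b * g l)
      = quad_form L W c c - b * quad_form L W c g - b * quad_form L W g c + b\<^sup>2 * quad_form L W g g"
    unfolding quad_form_def
    by (simp add: algebra_simps power2_eq_square sum.distrib sum_subtractf sum_distrib_left)
  then show ?thesis using quad_form_commute[OF assms, of c g] by simp
qed

lemma argmin_quad_form_affine:
  fixes c g :: "nat \<Rightarrow> real"
  assumes W: "pos_def_on L W" and g: "\<exists>l<L. g l \<noteq> 0"
  defines "J \<equiv> \<lambda>b. quad_form L W (\<lambda>l. c l - b * g l) (\<lambda>l. c l - b * g l)"
  shows "(THE b. \<forall>b'. J b \<le> J b') = quad_form L W g c / quad_form L W g g"
proof -
  define G where "G = quad_form L W g g"
  define b0 where "b0 = quad_form L W g c / G"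
  have G: "G > 0" unfolding G_def by (rule pos_def_on_pos[OF W g])
  have J: "J b = J b0 + G * (b - b0)\<^sup>2" for b
    using G unfolding J_def quad_form_affine[OF W] b0_def G_def
    by (simp add: field_simps power2_eq_square)
  show ?thesis
    unfolding b0_def[symmetric] G_def[symmetric]
  proof (rule the_equality)
    show "\<forall>b'. J b0 \<le> J b'"
    proof
      fix b' show "J b0 \<le> J b'" using J[of b'] G by (simp add: add_increasing2)
    qed
  next
    fix b assume "\<forall>b'. J b \<le> J b'"
    then have "G * (b - b0)\<^sup>2 \<le> 0" using J[of b] by (metis add_le_same_cancel1)
    then show "b = b0" using G by (simp add: mult_le_0_iff)
  qed
qed

lemma beta_star_eq_quad_form_ratio:
  assumes moment: "\<And>b l. l < L \<Longrightarrow> gmm_moment M Z Y D b l = c l - b * g l"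
    and W: "pos_def_on L W" and g: "\<exists>l<L. g l \<noteq> 0"
  shows "beta_star L M Z Y D W = quad_form L W g c / quad_form L W g g"
proof -
  have "gmm_obj L M Z Y D W = (\<lambda>b. quad_form L W (\<lambda>l. c l - b * g l) (\<lambda>l. c l - b * g l))"
    unfolding gmm_obj_def quad_form_def by (intro ext sum.cong refl) (simp add: moment)
  then show ?thesis
    unfolding beta_star_def using argmin_quad_form_affine[OF W g] by simp
qed

lemma sum_lam_mult_eq_quad_form_ratio:
  assumes W: "pos_def_on L W" and c: "\<And>l. l < L \<Longrightarrow> c l = g l * r l"
  shows "(\<Sum>l<L. lam L g W l * r l) = quad_form L W g c / quad_form L W g g"
proof -
  have "(\<Sum>l<L. lam L g W l * r l) = quad_form L W c g / quad_form L W g g"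
    unfolding lam_def quad_form_def
    by (simp add: sum_divide_distrib sum_distrib_left c mult_ac)
  then show ?thesis using quad_form_commute[OF W] by simp
qed

lemma integral_comp_uniform_01:
  fixes f :: "real \<Rightarrow> real"
  assumes U[measurable]: "U \<in> borel_measurable M"
    and U_unif: "distr M borel U = uniform_measure lborel {0..1}"
    and f[measurable]: "f \<in> borel_measurable borel"
  shows "(\<integral>\<omega>. f (U \<omega>) \<partial>M) = (LBINT u=0..1. f u)"
proof -
  have "(\<integral>\<omega>. f (U \<omega>) \<partial>M) = integral\<^sup>L (distr M borel U) f"
    by (simp add: integral_distr)
  also have "\<dots> = integral\<^sup>L (uniform_measure lborel {0..1}) f"
    by (simp add: U_unif)
  also have "uniform_measure lborel {0..1::real} = density lborel (\<lambda>x. ennreal (indicator {0..1} x))"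
    unfolding uniform_measure_def by (simp add: ennreal_indicator divide_ennreal_def)
  also have "integral\<^sup>L (density lborel (\<lambda>x. ennreal (indicator {0..1} x))) f = (LBINT u:{0..1}. f u)"
    by (subst integral_density) (auto simp: set_lebesgue_integral_def)
  also have "\<dots> = (LBINT u=0..1. f u)"
    using interval_integral_Icc[of 0 1 f] by (simp add: zero_ereal_def one_ereal_def)
  finally show ?thesis .
qed

lemma integral_uniform_01_le:
  assumes U[measurable]: "U \<in> borel_measurable M"
    and U_unif: "distr M borel U = uniform_measure lborel {0..1}"
    and c: "0 \<le> c" "c \<le> (1::real)"
  shows "(\<integral>\<omega>. of_bool (U \<omega> \<le> c) \<partial>M) = c"
proof -
  have "(\<integral>\<omega>. of_bool (U \<omega> \<le> c) \<partial>M) = (\<integral>\<omega>. indicator (U -` {..c} \<inter> space M) \<omega> \<partial>M)"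
    by (rule Bochner_Integration.integral_cong) (auto simp: indicator_def)
  also have "\<dots> = measure (uniform_measure lborel {0..1}) {..c}"
    by (simp add: measure_distr U_unif[symmetric])
  also have "\<dots> = measure lborel ({0..1} \<inter> {..c}) / measure lborel {0..1::real}"
    by (rule measure_uniform_measure) auto
  also have "{0..1} \<inter> {..c} = {0..c}" using c by auto
  finally show ?thesis using c by simp
qed

lemma integral_indicator_mult_indep:
  assumes "prob_space M" and X[measurable]: "X \<in> M \<rightarrow>\<^sub>M N" and S[measurable]: "S \<in> sets M"
    and indep: "\<And>A. A \<in> sets N \<Longrightarrow>
      measure M (X -` A \<inter> space M \<inter> S) = measure M (X -` A \<inter> space M) * measure M S"
    and g[measurable]: "g \<in> borel_measurable N"
  shows "(\<integral>\<omega>. indicator S \<omega> * g (X \<omega>) \<partial>M) = measure M S * (\<integral>\<omega>. g (X \<omega>) \<partial>M)"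
proof -
  interpret prob_space M by fact
  let ?MS = "density M (\<lambda>\<omega>. ennreal (indicator S \<omega>))"
  have distr_restrict: "distr ?MS N X = density (distr M N X) (\<lambda>_. measure M S)"
  proof (rule measure_eqI)
    fix A assume "A \<in> sets (distr ?MS N X)"
    then have A[measurable]: "A \<in> sets N" by simp
    have "emeasure (distr ?MS N X) A
        = (\<integral>\<^sup>+\<omega>. ennreal (indicator S \<omega>) * indicator (X -` A \<inter> space M) \<omega> \<partial>M)"
      by (simp add: emeasure_distr emeasure_density)
    also have "\<dots> = (\<integral>\<^sup>+\<omega>. indicator (X -` A \<inter> space M \<inter> S) \<omega> \<partial>M)"
      by (rule nn_integral_cong) (simp split: split_indicator)
    also have "\<dots> = emeasure M (X -` A \<inter> space M \<inter> S)"
      by (rule nn_integral_indicator) measurable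
    also have "\<dots> = emeasure (density (distr M N X) (\<lambda>_. measure M S)) A"
      by (simp add: emeasure_density_const emeasure_distr emeasure_eq_measure indep ennreal_mult
          mult.commute)
    finally show "emeasure (distr ?MS N X) A = emeasure (density (distr M N X) (\<lambda>_. measure M S)) A" .
  qed simp
  have "(\<integral>\<omega>. indicator S \<omega> * g (X \<omega>) \<partial>M) = integral\<^sup>L (distr ?MS N X) g"
    by (simp add: integral_distr integral_density)
  also have "\<dots> = measure M S * (\<integral>\<omega>. g (X \<omega>) \<partial>M)"
    by (simp add: distr_restrict integral_density integral_distr)
  finally show ?thesis .
qed

lemma integral_indicator_mult_finite_partition:
  fixes X :: "'a \<Rightarrow> real"
  assumes Z: "Z \<in> M \<rightarrow>\<^sub>M count_space UNIV" and C: "finite C"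
    and ZC: "\<And>\<omega>. \<omega> \<in> space M \<Longrightarrow> Z \<omega> \<in> C" and X: "integrable M X"
  shows "(\<integral>\<omega>. indicator {\<omega>\<in>space M. Q (Z \<omega>)} \<omega> * X \<omega> \<partial>M)
     = (\<Sum>z\<in>C. of_bool (Q z) * (\<integral>\<omega>. indicator {\<omega>\<in>space M. Z \<omega> = z} \<omega> * X \<omega> \<partial>M))"
proof -
  have cell: "{\<omega>\<in>space M. Z \<omega> = z} \<in> sets M" for z
    using measurable_sets[OF Z, of "{z}"] by (simp add: vimage_def Int_def conj_commute)
  have "(\<integral>\<omega>. indicator {\<omega>\<in>space M. Q (Z \<omega>)} \<omega> * X \<omega> \<partial>M)
     = (\<integral>\<omega>. (\<Sum>z\<in>C. of_bool (Q z) * (indicator {\<omega>\<in>space M. Z \<omega> = z} \<omega> * X \<omega>)) \<partial>M)"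
  proof (rule Bochner_Integration.integral_cong[OF refl])
    fix \<omega> assume "\<omega> \<in> space M"
    then show "indicator {\<omega>\<in>space M. Q (Z \<omega>)} \<omega> * X \<omega>
        = (\<Sum>z\<in>C. of_bool (Q z) * (indicator {\<omega>\<in>space M. Z \<omega> = z} \<omega> * X \<omega>))"
      using ZC C by (simp add: indicator_def if_distrib[of "\<lambda>x. x * _"] sum.delta' cong: if_cong)
  qed
  also have "\<dots> = (\<Sum>z\<in>C. of_bool (Q z) * (\<integral>\<omega>. indicator {\<omega>\<in>space M. Z \<omega> = z} \<omega> * X \<omega> \<partial>M))"
    using integrable_mult_indicator[OF cell X] by simp
  finally show ?thesis .
qed

lemma covar_indicator:
  fixes X :: "'a \<Rightarrow> real"
  assumes "prob_space M" and A: "A \<in> sets M" and X: "integrable M X"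
    and f: "\<And>\<omega>. \<omega> \<in> space M \<Longrightarrow> f \<omega> = indicator A \<omega>"
    and A_nontrivial: "0 < measure M A" "measure M A < 1"
  shows "covar M X f
    = measure M A * (1 - measure M A) * (cexp_ev M X A - cexp_ev M X (space M - A))"
proof -
  interpret prob_space M by fact
  have compl: "measure M (space M - A) = 1 - measure M A"
    using A by (simp add: prob_compl)
  have "(\<integral>\<omega>. X \<omega> * f \<omega> \<partial>M) = (\<integral>\<omega>. indicator A \<omega> * X \<omega> \<partial>M)"
    by (rule Bochner_Integration.integral_cong) (auto simp: f)
  moreover have "(\<integral>\<omega>. f \<omega> \<partial>M) = measure M A"
    using A by (simp add: f Bochner_Integration.integral_cong[OF refl f] Int_absorb2
        sets.sets_into_space)
  moreover have "(\<integral>\<omega>. X \<omega> \<partial>M)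
      = (\<integral>\<omega>. indicator A \<omega> * X \<omega> \<partial>M) + (\<integral>\<omega>. indicator (space M - A) \<omega> * X \<omega> \<partial>M)"
  proof -
    have "(\<integral>\<omega>. X \<omega> \<partial>M)
        = (\<integral>\<omega>. indicator A \<omega> * X \<omega> + indicator (space M - A) \<omega> * X \<omega> \<partial>M)"
      by (rule Bochner_Integration.integral_cong) (auto split: split_indicator)
    then show ?thesis
      using A integrable_mult_indicator[OF _ X] by (simp add: Bochner_Integration.integral_add)
  qed
  ultimately show ?thesis
    using A_nontrivial unfolding covar_def cexp_ev_def compl by (simp add: field_simps)
qed

lemma integral_indicator_mult_real_cond_exp_vimage:
  fixes f :: "'a \<Rightarrow> real" and U :: "'a \<Rightarrow> real"
  assumes "prob_space M" and U[measurable]: "U \<in> borel_measurable M" and f: "integrable M f"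
    and h[measurable]: "h \<in> borel_measurable borel"
    and cond_exp: "AE \<omega> in M. real_cond_exp M (vimage_algebra (space M) U borel) f \<omega> = h (U \<omega>)"
  shows "integrable M (\<lambda>\<omega>. h (U \<omega>))"
    and "B \<in> sets borel \<Longrightarrow>
      (\<integral>\<omega>. indicator B (U \<omega>) * h (U \<omega>) \<partial>M) = (\<integral>\<omega>. indicator B (U \<omega>) * f \<omega> \<partial>M)"
proof -
  interpret prob_space M by fact
  let ?F = "vimage_algebra (space M) U borel"
  interpret F: finite_measure_subalgebra M ?F
    by unfold_locales (use U in \<open>simp add: subalgebra_def measurable_iff_sets\<close>)
  have cond_exp_meas: "real_cond_exp M ?F f \<in> borel_measurable M"
    by (rule borel_measurable_cond_exp2)
  show "integrable M (\<lambda>\<omega>. h (U \<omega>))"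
    using integrable_cong_AE[OF cond_exp_meas _ cond_exp] F.real_cond_exp_int(1)[OF f] by simp
  assume B[measurable]: "B \<in> sets borel"
  have B_F: "U -` B \<inter> space M \<in> sets ?F"
    by (rule in_vimage_algebra) simp
  have "(\<integral>\<omega>. indicator B (U \<omega>) * f \<omega> \<partial>M)
      = (\<integral>\<omega>. indicator (U -` B \<inter> space M) \<omega> * f \<omega> \<partial>M)"
    by (rule Bochner_Integration.integral_cong) (auto split: split_indicator)
  also have "\<dots> = (\<integral>\<omega>. indicator (U -` B \<inter> space M) \<omega> * real_cond_exp M ?F f \<omega> \<partial>M)"
    using F.real_cond_exp_intA[OF f B_F] unfolding set_lebesgue_integral_def by simp
  also have "\<dots> = (\<integral>\<omega>. indicator B (U \<omega>) * h (U \<omega>) \<partial>M)"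
    by (rule integral_cong_AE) (use cond_exp in \<open>auto split: split_indicator\<close>)
  finally show "(\<integral>\<omega>. indicator B (U \<omega>) * h (U \<omega>) \<partial>M) = (\<integral>\<omega>. indicator B (U \<omega>) * f \<omega> \<partial>M)"
    ..
qed

lemma integrable_of_bool_mult:
  fixes X :: "'a \<Rightarrow> real"
  assumes "{\<omega>\<in>space M. P \<omega>} \<in> sets M" and "integrable M X"
  shows "integrable M (\<lambda>\<omega>. of_bool (P \<omega>) * X \<omega>)"
  using integrable_mult_indicator[OF assms]
  by (simp add: indicator_def of_bool_def cong: Bochner_Integration.integrable_cong)

lemma finite_cube: "finite {z. in_cube L z}"
proof (rule finite_subset)
  show "{z. in_cube L z} \<subseteq> (\<lambda>S l. l \<in> S) ` Pow {..<L}"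
  proof
    fix z assume "z \<in> {z. in_cube L z}"
    then have "{l. z l} \<in> Pow {..<L}" by (auto simp: in_cube_def not_le[symmetric])
    moreover have "z = (\<lambda>l. l \<in> {l. z l})" by simp
    ultimately show "z \<in> (\<lambda>S l. l \<in> S) ` Pow {..<L}" by blast
  qed
qed simp

section \<open>The latent index model\<close>

locale latent_index_model = prob_space M
  for L :: nat and M :: "'a measure" and Y0 Y1 U :: "'a \<Rightarrow> real" and Z :: "'a \<Rightarrow> nat \<Rightarrow> bool"
    and V :: "(nat \<Rightarrow> bool) \<Rightarrow> real" and D Y :: "'a \<Rightarrow> real" and MTE :: "real \<Rightarrow> real" +
  assumes Y0_int: "integrable M Y0" and Y1_int: "integrable M Y1"
    and U_meas[measurable]: "U \<in> borel_measurable M"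
    and U_unif: "distr M borel U = uniform_measure lborel {0..1}"
    and Z_meas[measurable]: "Z \<in> M \<rightarrow>\<^sub>M count_space UNIV"
    and Z_cube: "\<And>\<omega>. \<omega> \<in> space M \<Longrightarrow> in_cube L (Z \<omega>)"
    and V_range: "\<And>z. in_cube L z \<Longrightarrow> 0 \<le> V z \<and> V z \<le> 1"
    and D_def: "\<And>\<omega>. D \<omega> = (if V (Z \<omega>) \<ge> U \<omega> then 1 else 0)"
    and Y_def: "\<And>\<omega>. Y \<omega> = D \<omega> * Y1 \<omega> + (1 - D \<omega>) * Y0 \<omega>"
    and indep: "\<And>A B. A \<in> sets borel \<Longrightarrow>
         measure M {\<omega> \<in> space M. (Y0 \<omega>, Y1 \<omega>, U \<omega>) \<in> A \<and> Z \<omega> \<in> B}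
       = measure M {\<omega> \<in> space M. (Y0 \<omega>, Y1 \<omega>, U \<omega>) \<in> A} * measure M {\<omega> \<in> space M. Z \<omega> \<in> B}"
    and p_pos: "\<And>l. l < L \<Longrightarrow> p_inst M Z l > 0"
    and pi_pos: "\<And>l. l < L \<Longrightarrow> diff_inst M Z D l > 0"
    and Sigma_pd: "pos_def_on L (SigmaZ M Z)"
    and MTE_meas[measurable]: "MTE \<in> borel_measurable borel"
    and MTE_def: "AE \<omega> in M. real_cond_exp M (vimage_algebra (space M) U borel) (\<lambda>\<omega>. Y1 \<omega> - Y0 \<omega>) \<omega> = MTE (U \<omega>)"
begin

lemma Z_event[measurable]: "{\<omega>\<in>space M. Q (Z \<omega>)} \<in> sets M"
  using measurable_sets[OF Z_meas, of "{z. Q z}"] by (simp add: vimage_def Int_def conj_commute)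

lemma Y0_meas[measurable]: "Y0 \<in> borel_measurable M" and Y1_meas[measurable]: "Y1 \<in> borel_measurable M"
  using Y0_int Y1_int by auto

lemma V_Z_meas[measurable]: "(\<lambda>\<omega>. V (Z \<omega>)) \<in> borel_measurable M"
  by (rule measurable_compose[OF Z_meas]) simp

lemma D_eq: "D = (\<lambda>\<omega>. of_bool (U \<omega> \<le> V (Z \<omega>)))"
  by (auto simp: D_def)

lemma Y_eq: "Y = (\<lambda>\<omega>. Y0 \<omega> + of_bool (U \<omega> \<le> V (Z \<omega>)) * (Y1 \<omega> - Y0 \<omega>))"
  by (auto simp: Y_def D_def algebra_simps)

lemma D_meas[measurable]: "D \<in> borel_measurable M"
  unfolding D_eq by measurable

lemma integrable_D: "integrable M D"
  by (rule integrable_const_bound[where B=1]) (auto simp: D_def)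

lemma integrable_of_bool_U_le: "integrable M (\<lambda>\<omega>. of_bool (U \<omega> \<le> c) :: real)"
  by (rule integrable_const_bound[where B=1]) auto

lemma integrable_Y: "integrable M Y"
  unfolding Y_eq using Y0_int Y1_int by (simp add: integrable_of_bool_mult)

definition cell_prob :: "(nat \<Rightarrow> bool) \<Rightarrow> real" where
  "cell_prob z = measure M {\<omega>\<in>space M. Z \<omega> = z}"

definition treatment_gain :: "real \<Rightarrow> real" where
  "treatment_gain c = (\<integral>\<omega>. of_bool (U \<omega> \<le> c) * (Y1 \<omega> - Y0 \<omega>) \<partial>M)"

lemma integral_cell_fun:
  "(\<integral>\<omega>. indicator {\<omega>\<in>space M. Z \<omega> = z} \<omega> * f (Z \<omega>) \<partial>M) = cell_prob z * f z"
proof -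
  have "(\<integral>\<omega>. indicator {\<omega>\<in>space M. Z \<omega> = z} \<omega> * f (Z \<omega>) \<partial>M)
      = (\<integral>\<omega>. f z * indicator {\<omega>\<in>space M. Z \<omega> = z} \<omega> \<partial>M)"
    by (rule Bochner_Integration.integral_cong) (auto split: split_indicator)
  then show ?thesis by (simp add: cell_prob_def)
qed

lemma integral_cell_indep:
  fixes g :: "real \<times> real \<times> real \<Rightarrow> real"
  assumes "g \<in> borel_measurable (borel \<Otimes>\<^sub>M borel \<Otimes>\<^sub>M borel)"
  shows "(\<integral>\<omega>. indicator {\<omega>\<in>space M. Z \<omega> = z} \<omega> * g (Y0 \<omega>, Y1 \<omega>, U \<omega>) \<partial>M)
       = cell_prob z * (\<integral>\<omega>. g (Y0 \<omega>, Y1 \<omega>, U \<omega>) \<partial>M)"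
  unfolding cell_prob_def
proof (rule integral_indicator_mult_indep[where X = "\<lambda>\<omega>. (Y0 \<omega>, Y1 \<omega>, U \<omega>)" and N = borel])
  fix A :: "(real \<times> real \<times> real) set" assume "A \<in> sets borel"
  from indep[OF this, of "{z}"]
  show "measure M ((\<lambda>\<omega>. (Y0 \<omega>, Y1 \<omega>, U \<omega>)) -` A \<inter> space M \<inter> {\<omega>\<in>space M. Z \<omega> = z})
      = measure M ((\<lambda>\<omega>. (Y0 \<omega>, Y1 \<omega>, U \<omega>)) -` A \<inter> space M) * measure M {\<omega>\<in>space M. Z \<omega> = z}"
    by (simp add: vimage_def Int_def conj_ac)
qed (use assms in \<open>simp_all add: prob_space_axioms borel_prod\<close>)

lemma integral_U_le_V: "in_cube L z \<Longrightarrow> (\<integral>\<omega>. of_bool (U \<omega> \<le> V z) \<partial>M) = V z"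
  using V_range by (intro integral_uniform_01_le[OF U_meas U_unif]) auto

lemma integral_cell_D:
  assumes "in_cube L z"
  shows "(\<integral>\<omega>. indicator {\<omega>\<in>space M. Z \<omega> = z} \<omega> * D \<omega> \<partial>M) = cell_prob z * V z"
proof -
  have "(\<integral>\<omega>. indicator {\<omega>\<in>space M. Z \<omega> = z} \<omega> * D \<omega> \<partial>M)
      = (\<integral>\<omega>. indicator {\<omega>\<in>space M. Z \<omega> = z} \<omega> * of_bool (U \<omega> \<le> V z) \<partial>M)"
    by (rule Bochner_Integration.integral_cong) (auto simp: D_eq split: split_indicator)
  also have "\<dots> = cell_prob z * V z"
    using integral_U_le_V[OF assms]
    by (simp add: integral_cell_indep[of "\<lambda>t. of_bool (snd (snd t) \<le> V z)", simplified])
  finally show ?thesis .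
qed

lemma integral_cell_Y:
  "(\<integral>\<omega>. indicator {\<omega>\<in>space M. Z \<omega> = z} \<omega> * Y \<omega> \<partial>M)
     = cell_prob z * ((\<integral>\<omega>. Y0 \<omega> \<partial>M) + treatment_gain (V z))"
proof -
  have "(\<integral>\<omega>. indicator {\<omega>\<in>space M. Z \<omega> = z} \<omega> * Y \<omega> \<partial>M)
      = (\<integral>\<omega>. indicator {\<omega>\<in>space M. Z \<omega> = z} \<omega>
            * (Y0 \<omega> + of_bool (U \<omega> \<le> V z) * (Y1 \<omega> - Y0 \<omega>)) \<partial>M)"
    by (rule Bochner_Integration.integral_cong) (auto simp: Y_eq split: split_indicator)
  also have "\<dots> = cell_prob z * (\<integral>\<omega>. Y0 \<omega> + of_bool (U \<omega> \<le> V z) * (Y1 \<omega> - Y0 \<omega>) \<partial>M)"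
    by (rule integral_cell_indep[of "\<lambda>t. fst t + of_bool (snd (snd t) \<le> V z) * (fst (snd t) - fst t)",
          simplified]) measurable
  also have "(\<integral>\<omega>. Y0 \<omega> + of_bool (U \<omega> \<le> V z) * (Y1 \<omega> - Y0 \<omega>) \<partial>M)
      = (\<integral>\<omega>. Y0 \<omega> \<partial>M) + treatment_gain (V z)"
    unfolding treatment_gain_def using Y0_int Y1_int by (simp add: integrable_of_bool_mult)
  finally show ?thesis .
qed

lemma prob_not_instr: "measure M {\<omega>\<in>space M. \<not> Z \<omega> l} = 1 - p_inst M Z l"
proof -
  have "{\<omega>\<in>space M. \<not> Z \<omega> l} = space M - {\<omega>\<in>space M. Z \<omega> l}" by auto
  then show ?thesis by (simp add: prob_compl p_inst_def)
qed

lemma zr_instr_eq_indicator: "\<omega> \<in> space M \<Longrightarrow> zr (Z \<omega> l) = indicator {\<omega>\<in>space M. Z \<omega> l} \<omega>"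
  by (simp add: zr_def split: split_indicator)

lemma integral_zr_instr: "(\<integral>\<omega>. zr (Z \<omega> l) \<partial>M) = p_inst M Z l"
proof -
  have "(\<integral>\<omega>. zr (Z \<omega> l) \<partial>M) = (\<integral>\<omega>. indicator {\<omega>\<in>space M. Z \<omega> l} \<omega> \<partial>M)"
    by (rule Bochner_Integration.integral_cong) (auto simp: zr_instr_eq_indicator)
  then show ?thesis by (simp add: p_inst_def)
qed

lemma SigmaZ_diag: "SigmaZ M Z l l = p_inst M Z l * (1 - p_inst M Z l)"
proof -
  have "(\<integral>\<omega>. zr (Z \<omega> l) * zr (Z \<omega> l) \<partial>M) = (\<integral>\<omega>. zr (Z \<omega> l) \<partial>M)"
    by (rule Bochner_Integration.integral_cong) (auto simp: zr_def)
  then show ?thesis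
    by (simp add: SigmaZ_def covar_def integral_zr_instr algebra_simps power2_eq_square)
qed

lemma p_less_1: "l < L \<Longrightarrow> p_inst M Z l < 1"
  using pos_def_on_diag_pos[OF Sigma_pd, of l] p_pos[of l]
  by (simp add: SigmaZ_diag zero_less_mult_iff)

lemma covar_zr_instr:
  assumes "integrable M X" and "l < L"
  shows "covar M X (\<lambda>\<omega>. zr (Z \<omega> l)) = p_inst M Z l * (1 - p_inst M Z l) * diff_inst M Z X l"
proof -
  have "space M - {\<omega>\<in>space M. Z \<omega> l} = {\<omega>\<in>space M. \<not> Z \<omega> l}" by auto
  then show ?thesis
    using covar_indicator[OF prob_space_axioms Z_event assms(1) zr_instr_eq_indicator]
      p_pos[OF assms(2)] p_less_1[OF assms(2)]
    by (simp add: diff_inst_def p_inst_def)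
qed

lemma gam_pos: "l < L \<Longrightarrow> gam M Z D l > 0"
  using p_pos[of l] p_less_1[of l] pi_pos[of l]
  by (simp add: gam_def covar_zr_instr integrable_D)

lemma covar_Y_eq_gam_mult_wald:
  "l < L \<Longrightarrow> covar M Y (\<lambda>\<omega>. zr (Z \<omega> l)) = gam M Z D l * wald M Z Y D l"
  using pi_pos[of l] by (simp add: gam_def wald_def covar_zr_instr integrable_D integrable_Y)

lemma gmm_moment_eq: "gmm_moment M Z Y D b l = covar M Y (\<lambda>\<omega>. zr (Z \<omega> l)) - b * gam M Z D l"
proof -
  have zr_int: "integrable M (\<lambda>\<omega>. X \<omega> * zr (Z \<omega> l))" if "integrable M X" for X :: "'a \<Rightarrow> real"
    using integrable_real_mult_indicator[OF Z_event that]
    by (simp add: zr_instr_eq_indicator cong: Bochner_Integration.integrable_cong)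
  have "gmm_moment M Z Y D b l
      = (\<integral>\<omega>. (Y \<omega> * zr (Z \<omega> l) - p_inst M Z l * Y \<omega>)
            - b * (D \<omega> * zr (Z \<omega> l) - p_inst M Z l * D \<omega>) \<partial>M)"
    unfolding gmm_moment_def by (rule Bochner_Integration.integral_cong) (simp_all add: algebra_simps)
  also have "\<dots> = covar M Y (\<lambda>\<omega>. zr (Z \<omega> l)) - b * gam M Z D l"
    using zr_int[OF integrable_Y] zr_int[OF integrable_D] integrable_Y integrable_D
    by (simp add: gam_def covar_def integral_zr_instr)
  finally show ?thesis .
qed

text \<open>The weight of the cell Z = z in E[- | Z_l = 1] - E[- | Z_l = 0].\<close>
definition instr_contrast :: "nat \<Rightarrow> (nat \<Rightarrow> bool) \<Rightarrow> real" where
  "instr_contrast l z =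
    (if z l then cell_prob z / p_inst M Z l else - (cell_prob z / (1 - p_inst M Z l)))"

lemma diff_inst_eq_contrast_sum:
  assumes X: "integrable M X"
    and cell: "\<And>z. in_cube L z \<Longrightarrow>
      (\<integral>\<omega>. indicator {\<omega>\<in>space M. Z \<omega> = z} \<omega> * X \<omega> \<partial>M) = cell_prob z * k z"
  shows "diff_inst M Z X l = (\<Sum>z\<in>{z. in_cube L z}. instr_contrast l z * k z)"
proof -
  have split: "(\<integral>\<omega>. indicator {\<omega>\<in>space M. Q (Z \<omega>)} \<omega> * X \<omega> \<partial>M)
      = (\<Sum>z\<in>{z. in_cube L z}. of_bool (Q z) * (cell_prob z * k z))" for Q
    using integral_indicator_mult_finite_partition[OF Z_meas finite_cube _ X, of L Q] Z_cube
    by (simp add: cell)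
  show ?thesis
    unfolding diff_inst_def cexp_ev_def split[of "\<lambda>z. z l"] split[of "\<lambda>z. \<not> z l"]
    by (simp add: prob_not_instr sum_divide_distrib flip: sum_subtractf p_inst_def)
      (auto simp: instr_contrast_def intro!: sum.cong)
qed

lemma sum_instr_contrast:
  assumes l: "l < L"
  shows "(\<Sum>z\<in>{z. in_cube L z}. instr_contrast l z) = 0"
proof -
  have "diff_inst M Z (\<lambda>_. 1) l = (\<Sum>z\<in>{z. in_cube L z}. instr_contrast l z * 1)"
    using integral_cell_fun[of _ "\<lambda>_. 1"] by (intro diff_inst_eq_contrast_sum) simp_all
  moreover have "diff_inst M Z (\<lambda>_. 1) l = 0"
    using p_pos[OF l] p_less_1[OF l] prob_not_instr[of l]
    by (simp add: diff_inst_def cexp_ev_def p_inst_def Int_absorb2)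
  ultimately show ?thesis by simp
qed

lemma diff_inst_D_eq: "diff_inst M Z D l = (\<Sum>z\<in>{z. in_cube L z}. instr_contrast l z * V z)"
  by (rule diff_inst_eq_contrast_sum[OF integrable_D integral_cell_D])

lemma diff_inst_V_eq: "diff_inst M Z (\<lambda>\<omega>. V (Z \<omega>)) l = diff_inst M Z D l"
proof -
  have "integrable M (\<lambda>\<omega>. V (Z \<omega>))"
    using V_range Z_cube by (intro integrable_const_bound[where B=1]) auto
  then show ?thesis
    unfolding diff_inst_D_eq by (rule diff_inst_eq_contrast_sum[OF _ integral_cell_fun])
qed

lemma wald_eq_contrast_sum:
  assumes "l < L"
  shows "wald M Z Y D l = (\<Sum>z\<in>{z. in_cube L z}. instr_contrast l z * treatment_gain (V z)) / diff_inst M Z D l"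
proof -
  have "diff_inst M Z Y l
      = (\<Sum>z\<in>{z. in_cube L z}. instr_contrast l z * ((\<integral>\<omega>. Y0 \<omega> \<partial>M) + treatment_gain (V z)))"
    by (rule diff_inst_eq_contrast_sum[OF integrable_Y integral_cell_Y])
  also have "\<dots> = (\<Sum>z\<in>{z. in_cube L z}. instr_contrast l z * treatment_gain (V z))"
    using sum_instr_contrast[OF assms]
    by (simp add: distrib_left sum.distrib sum_distrib_right[symmetric])
  finally show ?thesis by (simp add: wald_def)
qed

lemma hfun_eq_contrast_sum:
  "hfun M Z V l u = (\<Sum>z\<in>{z. in_cube L z}. instr_contrast l z * of_bool (u \<le> V z)) / diff_inst M Z D l"
proof -
  have "integrable M (\<lambda>\<omega>. of_bool (u \<le> V (Z \<omega>)) :: real)"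
    by (intro integrable_const_bound[where B=1]) auto
  then have "diff_inst M Z (\<lambda>\<omega>. of_bool (u \<le> V (Z \<omega>))) l
      = (\<Sum>z\<in>{z. in_cube L z}. instr_contrast l z * of_bool (u \<le> V z))"
    by (rule diff_inst_eq_contrast_sum[OF _ integral_cell_fun])
  moreover have "(\<lambda>\<omega>. indicator {\<omega>. u \<le> V (Z \<omega>)} \<omega>) = (\<lambda>\<omega>. of_bool (u \<le> V (Z \<omega>)) :: real)"
    by (simp add: indicator_def)
  ultimately show ?thesis
    by (simp add: hfun_def diff_inst_V_eq flip: diff_inst_def)
qed

lemma borel_measurable_hfun[measurable]: "hfun M Z V l \<in> borel_measurable borel"
proof -
  have "hfun M Z V l = (\<lambda>u. (\<Sum>z\<in>{z. in_cube L z}. instr_contrast l z * of_bool (u \<le> V z)) / diff_inst M Z D l)"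
    by (rule ext) (rule hfun_eq_contrast_sum)
  then show ?thesis by simp
qed

lemma
  fixes f :: "real \<Rightarrow> real"
  assumes f: "\<And>c. integrable M (\<lambda>\<omega>. f (U \<omega>) * of_bool (U \<omega> \<le> c))"
  shows integrable_mult_hfun: "integrable M (\<lambda>\<omega>. f (U \<omega>) * hfun M Z V l (U \<omega>))"
    and integral_mult_hfun: "(\<integral>\<omega>. f (U \<omega>) * hfun M Z V l (U \<omega>) \<partial>M)
      = (\<Sum>z\<in>{z. in_cube L z}. instr_contrast l z * (\<integral>\<omega>. f (U \<omega>) * of_bool (U \<omega> \<le> V z) \<partial>M))
        / diff_inst M Z D l"
proof -
  have eq: "(\<lambda>\<omega>. f (U \<omega>) * hfun M Z V l (U \<omega>)) = (\<lambda>\<omega>. \<Sum>z\<in>{z. in_cube L z}.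
      instr_contrast l z / diff_inst M Z D l * (f (U \<omega>) * of_bool (U \<omega> \<le> V z)))"
    by (simp add: hfun_eq_contrast_sum sum_distrib_left sum_divide_distrib mult_ac)
  show "integrable M (\<lambda>\<omega>. f (U \<omega>) * hfun M Z V l (U \<omega>))"
    unfolding eq using f by simp
  show "(\<integral>\<omega>. f (U \<omega>) * hfun M Z V l (U \<omega>) \<partial>M)
      = (\<Sum>z\<in>{z. in_cube L z}. instr_contrast l z * (\<integral>\<omega>. f (U \<omega>) * of_bool (U \<omega> \<le> V z) \<partial>M))
        / diff_inst M Z D l"
    unfolding eq using f by (simp add: Bochner_Integration.integral_sum sum_divide_distrib)
qed

lemma integrable_MTE_mult_of_bool: "integrable M (\<lambda>\<omega>. MTE (U \<omega>) * of_bool (U \<omega> \<le> c))"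
proof -
  have "integrable M (\<lambda>\<omega>. MTE (U \<omega>))"
    using integral_indicator_mult_real_cond_exp_vimage(1)[OF prob_space_axioms U_meas _ MTE_meas MTE_def]
      Y0_int Y1_int by simp
  then show ?thesis
    using integrable_of_bool_mult[where P = "\<lambda>\<omega>. U \<omega> \<le> c"] by (simp add: mult.commute)
qed

lemma treatment_gain_eq_integral_MTE: "treatment_gain c = (\<integral>\<omega>. MTE (U \<omega>) * of_bool (U \<omega> \<le> c) \<partial>M)"
  using integral_indicator_mult_real_cond_exp_vimage(2)[OF prob_space_axioms U_meas _ MTE_meas MTE_def,
      of "{..c}"] Y0_int Y1_int
  by (simp add: treatment_gain_def indicator_def mult.commute)

lemma wald_eq_integral_MTE_hfun:
  "l < L \<Longrightarrow> wald M Z Y D l = (\<integral>\<omega>. MTE (U \<omega>) * hfun M Z V l (U \<omega>) \<partial>M)"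
  by (simp add: wald_eq_contrast_sum integral_mult_hfun integrable_MTE_mult_of_bool
      treatment_gain_eq_integral_MTE)

lemma integral_hfun:
  assumes "l < L"
  shows "(\<integral>\<omega>. hfun M Z V l (U \<omega>) \<partial>M) = 1"
proof -
  have "(\<Sum>z\<in>{z. in_cube L z}. instr_contrast l z * (\<integral>\<omega>. of_bool (U \<omega> \<le> V z) \<partial>M)) = diff_inst M Z D l"
    unfolding diff_inst_D_eq by (rule sum.cong) (simp_all add: integral_U_le_V)
  then show ?thesis
    using integral_mult_hfun[of "\<lambda>_. 1" l] pi_pos[OF assms] by (simp add: integrable_of_bool_U_le)
qed

lemma integral_mult_hbar:
  assumes "\<And>l. l < L \<Longrightarrow> integrable M (\<lambda>\<omega>. f (U \<omega>) * hfun M Z V l (U \<omega>))"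
  shows "(\<integral>\<omega>. f (U \<omega>) * hbar L M Z V w (U \<omega>) \<partial>M) = (\<Sum>l<L. w l * (\<integral>\<omega>. f (U \<omega>) * hfun M Z V l (U \<omega>) \<partial>M))"
  using assms by (simp add: hbar_def sum_distrib_left mult.left_commute Bochner_Integration.integral_sum)

lemma sum_wald_eq_interval_integral_MTE_hbar:
  "(\<Sum>l<L. w l * wald M Z Y D l) = (LBINT u=0..1. MTE u * hbar L M Z V w u)"
proof -
  have "(LBINT u=0..1. MTE u * hbar L M Z V w u) = (\<integral>\<omega>. MTE (U \<omega>) * hbar L M Z V w (U \<omega>) \<partial>M)"
    by (rule integral_comp_uniform_01[OF U_meas U_unif, symmetric]) (simp add: hbar_def)
  also have "\<dots> = (\<Sum>l<L. w l * wald M Z Y D l)"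
    by (simp add: integral_mult_hbar integrable_mult_hfun integrable_MTE_mult_of_bool wald_eq_integral_MTE_hfun)
  finally show ?thesis ..
qed

lemma interval_integral_hbar: "(LBINT u=0..1. hbar L M Z V w u) = (\<Sum>l<L. w l)"
proof -
  have "(LBINT u=0..1. hbar L M Z V w u) = (\<integral>\<omega>. hbar L M Z V w (U \<omega>) \<partial>M)"
    by (rule integral_comp_uniform_01[OF U_meas U_unif, symmetric]) (simp add: hbar_def)
  also have "\<dots> = (\<Sum>l<L. w l)"
    using integral_mult_hbar[of "\<lambda>_. 1" w] integrable_mult_hfun[of "\<lambda>_. 1"]
    by (simp add: integral_hfun integrable_of_bool_U_le)
  finally show ?thesis .
qed

end

theorem proposition13:
  fixes L :: nat
    and M :: "'a measure"
    and Y0 Y1 U :: "'a \<Rightarrow> real"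
    and Z :: "'a \<Rightarrow> nat \<Rightarrow> bool"
    and V :: "(nat \<Rightarrow> bool) \<Rightarrow> real"
    and D Y :: "'a \<Rightarrow> real"
    and MTE :: "real \<Rightarrow> real"
    and W :: "nat \<Rightarrow> nat \<Rightarrow> real"
  assumes L2: "L \<ge> 2"
    and prob: "prob_space M"
    and Y_meas: "(\<lambda>\<omega>. (Y0 \<omega>, Y1 \<omega>)) \<in> borel_measurable M"
    and Y0_int: "integrable M Y0" and Y1_int: "integrable M Y1"
    and U_meas: "U \<in> borel_measurable M"
    and U_unif: "distr M borel U = uniform_measure lborel {0..1}"
    and Z_meas: "Z \<in> M \<rightarrow>\<^sub>M count_space UNIV"
    and Z_cube: "\<And>\<omega>. \<omega> \<in> space M \<Longrightarrow> in_cube L (Z \<omega>)"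
    and V_range: "\<And>z. in_cube L z \<Longrightarrow> 0 \<le> V z \<and> V z \<le> 1"
    and D_def: "\<And>\<omega>. D \<omega> = (if V (Z \<omega>) \<ge> U \<omega> then 1 else 0)"
    and Y_def: "\<And>\<omega>. Y \<omega> = D \<omega> * Y1 \<omega> + (1 - D \<omega>) * Y0 \<omega>"
    and A1: "\<And>A B. A \<in> sets borel \<Longrightarrow>
         measure M {\<omega> \<in> space M. (Y0 \<omega>, Y1 \<omega>, U \<omega>) \<in> A \<and> Z \<omega> \<in> B}
       = measure M {\<omega> \<in> space M. (Y0 \<omega>, Y1 \<omega>, U \<omega>) \<in> A} * measure M {\<omega> \<in> space M. Z \<omega> \<in> B}"
    and A2: "\<And>z z'. in_cube L z \<Longrightarrow> in_cube L z' \<Longrightarrow> (\<forall>l<L. z l \<longrightarrow> z' l) \<Longrightarrow> V z \<le> V z'"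
    and A3_p: "\<And>l. l < L \<Longrightarrow> p_inst M Z l > 0"
    and A3_pi: "\<And>l. l < L \<Longrightarrow> diff_inst M Z D l > 0"
    and A3_Sigma: "pos_def_on L (SigmaZ M Z)"
    and MTE_meas: "MTE \<in> borel_measurable borel"
    and MTE_def: "AE \<omega> in M. real_cond_exp M (vimage_algebra (space M) U borel) (\<lambda>\<omega>. Y1 \<omega> - Y0 \<omega>) \<omega> = MTE (U \<omega>)"
    and W_pd: "pos_def_on L W"
  shows "beta_star L M Z Y D W = (\<Sum>l<L. lam L (gam M Z D) W l * wald M Z Y D l)
       \<and> (\<Sum>l<L. lam L (gam M Z D) W l * wald M Z Y D l)
           = (LBINT u=0..1. MTE u * hbar L M Z V (lam L (gam M Z D) W) u)
       \<and> (\<forall>w::nat \<Rightarrow> real. (\<Sum>l<L. w l) = 1 \<longrightarrow> (LBINT u=0..1. hbar L M Z V w u) = 1)"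
proof -
  interpret latent_index_model L M Y0 Y1 U Z V D Y MTE
    by (rule latent_index_model.intro[OF prob latent_index_model_axioms.intro]) (fact assms)+
  let ?g = "gam M Z D" and ?c = "\<lambda>l. covar M Y (\<lambda>\<omega>. zr (Z \<omega> l))"
  have "\<exists>l<L. ?g l \<noteq> 0"
    using L2 gam_pos[of 0] by (intro exI[of _ 0]) simp
  then have "beta_star L M Z Y D W = quad_form L W ?g ?c / quad_form L W ?g ?g"
    by (rule beta_star_eq_quad_form_ratio[OF gmm_moment_eq W_pd])
  moreover have "(\<Sum>l<L. lam L ?g W l * wald M Z Y D l) = quad_form L W ?g ?c / quad_form L W ?g ?g"
    using W_pd covar_Y_eq_gam_mult_wald by (rule sum_lam_mult_eq_quad_form_ratio)
  ultimately show ?thesis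
    using sum_wald_eq_interval_integral_MTE_hbar interval_integral_hbar by simp
qed

end
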